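(* Let $\tilde n\ge2$, $\gamma>0$, $I>0$, and let $j\ge1$ be an integer. Let $\mathbf b^*,\boldsymbol\epsilon\in\mathbb R^{\tilde n}$ and $\Delta\mathbf w\in\mathbb R^p$ be fixed, with $\|\boldsymbol\epsilon\|_\infty\le\frac29I$. Let $Q_j=\{i:|b^*_i-(j-\frac12)I|\le\frac5{18}I\}$ and assume $|Q_j|\le\frac{\gamma\tilde n}{j\log\tilde n}$. Let $\tilde{\mathbf x}_1,\dots,\tilde{\mathbf x}_{\tilde n}$ be i.i.d. $\mathcal N(0,I_p)$ and $\eta_1,\dots,\eta_{\tilde n}$ i.i.d. uniform on $[-\frac1{18},\frac1{18}]$, independent. Define $$T_{3,j}=\sum_{i\in Q_j}\mathbb I\Big[|b_i^*+\epsilon_i+\langle\tilde{\mathbf x}_i,\Delta\mathbf w\rangle|<\big(j-\tfrac12+\eta_i\big)I\Big](b_i^*+\epsilon_i)\,\tilde{\mathbf x}_i.$$ Then $\|\mathbb E[T_{3,j}]\|_2\le\frac{11\gamma\tilde n}{\log\tilde n}\|\Delta\mathbf w\|_2$.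
   Context: $\mathbb I[\cdot]$ is the indicator function; the expectation is over the $\tilde{\mathbf x}_i$ and $\eta_i$; natural logarithm. *)

theory Defs
  imports "HOL-Probability.Probability"
begin

definition std_gaussian :: "(real ^ 'p) measure" where
  "std_gaussian = density lborel
     (\<lambda>x. ennreal ((2 * pi) powr (- real CARD('p) / 2) * exp (- (norm x)\<^sup>2 / 2)))"

definition unif_eta :: "real measure" where
  "unif_eta = uniform_measure lborel {-1/18..1/18}"

definition sample_space :: "nat \<Rightarrow> (nat \<Rightarrow> (real ^ 'p) \<times> real) measure" where
  "sample_space n = PiM {..<n} (\<lambda>_. std_gaussian \<Otimes>\<^sub>M unif_eta)"

definition Qset :: "nat \<Rightarrow> (nat \<Rightarrow> real) \<Rightarrow> real \<Rightarrow> nat \<Rightarrow> nat set" where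
  "Qset n b I j = {i \<in> {..<n}. \<bar>b i - (real j - 1/2) * I\<bar> \<le> 5/18 * I}"

definition T3 :: "nat \<Rightarrow> (nat \<Rightarrow> real) \<Rightarrow> (nat \<Rightarrow> real) \<Rightarrow> real ^ 'p \<Rightarrow> real \<Rightarrow> nat
                  \<Rightarrow> (nat \<Rightarrow> (real ^ 'p) \<times> real) \<Rightarrow> real ^ 'p" where
  "T3 n b \<epsilon> dw I j \<omega> =
     (\<Sum>i\<in>Qset n b I j.
        if \<bar>b i + \<epsilon> i + fst (\<omega> i) \<bullet> dw\<bar> < (real j - 1/2 + snd (\<omega> i)) * I
        then (b i + \<epsilon> i) *\<^sub>R fst (\<omega> i) else 0)"

end

theory Submission
  imports Defs
begin

text \<open>
  Each summand of \<open>T\<^sub>3\<^sub>,\<^sub>j\<close> depends only on the independent pair \<open>(x\<^sub>i, \<eta>\<^sub>i)\<close>, so the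
  expectation is a sum over \<open>i \<in> Q\<^sub>j\<close> of single-sample expectations. Integrating out \<open>\<eta>\<close>
  first replaces the indicator by the tail \<open>P(\<eta> > \<bar>c + \<langle>x, \<Delta>w\<rangle>\<bar> / I - (j - 1/2))\<close>, with
  \<open>c = b\<^sub>i + \<epsilon>\<^sub>i\<close>; since \<open>\<eta>\<close> has density 9 this is a \<open>9/I\<close>-Lipschitz function of
  \<open>\<langle>x, \<Delta>w\<rangle>\<close>. For a Lipschitz \<open>F\<close>, the Gaussian vector \<open>E[F(\<langle>x, w\<rangle>) x]\<close> has norm at
  most \<open>Lip(F) \<parallel>w\<parallel>\<close>: in each coordinate \<open>k\<close>, the reflection \<open>x\<^sub>k \<mapsto> -x\<^sub>k\<close> preserves the
  law and changes \<open>F(\<langle>x, w\<rangle>) x\<^sub>k\<close> into \<open>-F(\<langle>x, w\<rangle> - 2 x\<^sub>k w\<^sub>k) x\<^sub>k\<close>, so twice the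
  expectation is bounded by \<open>2 Lip(F) \<bar>w\<^sub>k\<bar> E x\<^sub>k\<^sup>2 = 2 Lip(F) \<bar>w\<^sub>k\<bar>\<close>. As \<open>\<bar>c\<bar> \<le> j I\<close> on
  \<open>Q\<^sub>j\<close>, each summand has norm at most \<open>9 j \<parallel>\<Delta>w\<parallel>\<close>, and the bound on \<open>\<bar>Q\<^sub>j\<bar>\<close> finishes.
\<close>

lemma indicator_PiE_eq_prod:
  assumes "finite B" and "x \<in> extensional B"
  shows "indicator (PiE B A) x = (\<Prod>b\<in>B. indicator (A b) (x b) :: 'c::comm_semiring_1)"
proof (cases "x \<in> PiE B A")
  case False
  with assms obtain b where "b \<in> B" "x b \<notin> A b" by (auto simp: PiE_iff)
  with False assms(1) show ?thesis by (simp add: prod_zero bexI[of _ b])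
qed (simp add: PiE_iff)

lemma density_PiM_prod:
  fixes f :: "'a \<Rightarrow> ennreal"
  assumes B: "finite B"
    and M: "sigma_finite_measure M" and Mf: "sigma_finite_measure (density M f)"
    and f[measurable]: "f \<in> borel_measurable M"
  shows "density (PiM B (\<lambda>_. M)) (\<lambda>x. \<Prod>b\<in>B. f (x b)) = PiM B (\<lambda>_. density M f)"
proof -
  interpret L: product_sigma_finite "\<lambda>_::'b. M" using M by (simp add: product_sigma_finite_def)
  interpret D: product_sigma_finite "\<lambda>_::'b. density M f" using Mf by (simp add: product_sigma_finite_def)
  show ?thesis
  proof (rule D.PiM_eqI[OF B])
    fix A assume A: "\<And>i. i \<in> B \<Longrightarrow> A i \<in> sets (density M f)"
    then have [measurable]: "A i \<in> sets M" if "i \<in> B" for i using that by simp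
    have "emeasure (density (PiM B (\<lambda>_. M)) (\<lambda>x. \<Prod>b\<in>B. f (x b))) (PiE B A)
        = (\<integral>\<^sup>+ x. (\<Prod>b\<in>B. f (x b) * indicator (A b) (x b)) \<partial>PiM B (\<lambda>_. M))"
    proof (subst emeasure_density)
      show "PiE B A \<in> sets (PiM B (\<lambda>_. M))" using A by (intro sets_PiM_I_finite B) simp
    next
      show "(\<integral>\<^sup>+ x. (\<Prod>b\<in>B. f (x b)) * indicator (PiE B A) x \<partial>PiM B (\<lambda>_. M))
          = (\<integral>\<^sup>+ x. (\<Prod>b\<in>B. f (x b) * indicator (A b) (x b)) \<partial>PiM B (\<lambda>_. M))"
        by (intro nn_integral_cong)
           (simp add: prod.distrib indicator_PiE_eq_prod[OF B] space_PiM PiE_iff)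
    qed simp
    also have "\<dots> = (\<Prod>b\<in>B. \<integral>\<^sup>+ t. f t * indicator (A b) t \<partial>M)"
      using B A by (intro L.product_nn_integral_prod) auto
    also have "\<dots> = (\<Prod>b\<in>B. emeasure (density M f) (A b))"
      using A by (intro prod.cong refl) (simp add: emeasure_density)
    finally show "emeasure (density (PiM B (\<lambda>_. M)) (\<lambda>x. \<Prod>b\<in>B. f (x b))) (PiE B A)
        = (\<Prod>b\<in>B. emeasure (density M f) (A b))" .
  qed (unfold sets_density, rule sets_PiM_cong, simp_all)
qed

lemma
  fixes f :: "'a \<Rightarrow> 'b::{banach, second_countable_topology}"
  assumes M: "prob_space M" and i: "i \<in> I" and f[measurable]: "f \<in> borel_measurable M"
  shows integrable_PiM_component: "integrable M f \<Longrightarrow> integrable (PiM I (\<lambda>_. M)) (\<lambda>\<omega>. f (\<omega> i))"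
    and integral_PiM_component: "(\<integral>\<omega>. f (\<omega> i) \<partial>PiM I (\<lambda>_. M)) = (\<integral>x. f x \<partial>M)"
proof -
  have distr: "distr (PiM I (\<lambda>_. M)) M (\<lambda>\<omega>. \<omega> i) = M"
    using M i by (rule distr_PiM_component)
  have [measurable]: "(\<lambda>\<omega>. \<omega> i) \<in> PiM I (\<lambda>_. M) \<rightarrow>\<^sub>M M"
    using i by measurable
  show "integrable M f \<Longrightarrow> integrable (PiM I (\<lambda>_. M)) (\<lambda>\<omega>. f (\<omega> i))"
    by (subst (asm) distr[symmetric]) (simp add: integrable_distr_eq)
  show "(\<integral>\<omega>. f (\<omega> i) \<partial>PiM I (\<lambda>_. M)) = (\<integral>x. f x \<partial>M)"
    by (subst (2) distr[symmetric]) (simp add: integral_distr)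
qed

definition reflection :: "'a::real_inner \<Rightarrow> 'a \<Rightarrow> 'a" where
  "reflection u x = x - (2 * (x \<bullet> u)) *\<^sub>R u"

lemma borel_measurable_reflection[measurable]:
  "reflection (u::'a::euclidean_space) \<in> borel_measurable borel"
  unfolding reflection_def[abs_def] by measurable

lemma norm_reflection:
  fixes x u :: "'a::real_inner"
  assumes "norm u = 1"
  shows "norm (reflection u x) = norm x"
proof -
  have "u \<bullet> u = 1" using assms by (simp add: norm_eq_sqrt_inner)
  then have "(norm (reflection u x))\<^sup>2 = (norm x)\<^sup>2"
    by (simp add: reflection_def power2_norm_eq_inner inner_commute[of u x] algebra_simps)
  then show ?thesis by simp
qed

lemma distr_lborel_reflection:
  fixes u :: "'a::euclidean_space"
  assumes u: "u \<in> Basis"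
  shows "distr lborel borel (reflection u) = lborel"
proof -
  define c where "c j = (if j = u then - 1 else 1 :: real)" for j :: 'a
  have reflection_eq: "reflection u = (\<lambda>x. 0 + (\<Sum>j\<in>Basis. (c j * (x \<bullet> j)) *\<^sub>R j))"
  proof
    fix x
    have "(\<Sum>j\<in>Basis. (c j * (x \<bullet> j)) *\<^sub>R j)
        = (\<Sum>j\<in>Basis. (x \<bullet> j) *\<^sub>R j) - (\<Sum>j\<in>Basis. (if j = u then (2 * (x \<bullet> u)) *\<^sub>R u else 0))"
      unfolding sum_subtractf[symmetric] by (intro sum.cong refl) (simp add: c_def flip: scaleR_diff_left)
    then show "reflection u x = 0 + (\<Sum>j\<in>Basis. (c j * (x \<bullet> j)) *\<^sub>R j)"
      using u by (simp add: reflection_def euclidean_representation)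
  qed
  have "lborel = density (distr lborel borel (reflection u)) (\<lambda>_. \<Prod>j\<in>Basis. \<bar>c j\<bar>)"
    unfolding reflection_eq by (rule lborel_affine_euclidean) (simp add: c_def)
  also have "(\<lambda>_. ennreal (\<Prod>j\<in>Basis. \<bar>c j\<bar>)) = (\<lambda>_. 1)"
    by (simp add: c_def abs_if prod.neutral)
  finally show ?thesis by (simp add: density_1)
qed

lemma abs_integral_lipschitz_mult_inner_le:
  fixes M :: "'a::euclidean_space measure" and F :: "real \<Rightarrow> real"
  assumes sets_M[measurable_cong]: "sets M = sets borel"
    and reflect: "distr M borel (reflection u) = M"
    and u: "norm u = 1"
    and F: "L-lipschitz_on UNIV F"
    and int: "integrable M (\<lambda>x. F (x \<bullet> w) * (x \<bullet> u))"
    and sq: "integrable M (\<lambda>x. (x \<bullet> u)\<^sup>2)"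
  shows "\<bar>\<integral>x. F (x \<bullet> w) * (x \<bullet> u) \<partial>M\<bar> \<le> L * \<bar>w \<bullet> u\<bar> * (\<integral>x. (x \<bullet> u)\<^sup>2 \<partial>M)"
proof -
  define k where "k x = F (x \<bullet> w) * (x \<bullet> u)" for x
  have F_meas[measurable]: "F \<in> borel_measurable borel"
    using F by (intro borel_measurable_continuous_onI lipschitz_on_continuous_on)
  have R_meas[measurable]: "reflection u \<in> M \<rightarrow>\<^sub>M M"
    unfolding measurable_cong_sets[OF sets_M sets_M] by measurable
  have reflect': "distr M M (reflection u) = M"
    using reflect by (simp add: distr_cong[OF refl sets_M[symmetric]])
  have int_R: "integrable M (\<lambda>x. k (reflection u x))"
    using int by (subst (asm) reflect'[symmetric]) (simp add: integrable_distr_eq k_def)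
  have integral_R: "(\<integral>x. k (reflection u x) \<partial>M) = (\<integral>x. k x \<partial>M)"
    by (subst (2) reflect'[symmetric], rule integral_distr[symmetric, OF R_meas])
       (simp add: k_def)
  have "u \<bullet> u = 1" using u by (simp add: norm_eq_sqrt_inner)
  then have k_R: "k (reflection u x) = - F (x \<bullet> w - 2 * (x \<bullet> u) * (w \<bullet> u)) * (x \<bullet> u)" for x
    by (simp add: k_def reflection_def algebra_simps inner_commute[of u w])
  have pointwise: "\<bar>k x + k (reflection u x)\<bar> \<le> 2 * (L * \<bar>w \<bullet> u\<bar> * (x \<bullet> u)\<^sup>2)" for x
  proof -
    have "\<bar>k x + k (reflection u x)\<bar> = \<bar>x \<bullet> u\<bar> * \<bar>F (x \<bullet> w) - F (x \<bullet> w - 2 * (x \<bullet> u) * (w \<bullet> u))\<bar>"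
      unfolding k_R by (simp add: k_def algebra_simps flip: abs_mult)
    also have "\<dots> \<le> \<bar>x \<bullet> u\<bar> * (L * \<bar>2 * (x \<bullet> u) * (w \<bullet> u)\<bar>)"
      using lipschitz_onD[OF F, of "x \<bullet> w" "x \<bullet> w - 2 * (x \<bullet> u) * (w \<bullet> u)"]
      by (intro mult_left_mono) (auto simp: dist_real_def)
    finally show ?thesis by (simp add: abs_mult power2_eq_square algebra_simps)
  qed
  have "2 * \<bar>\<integral>x. k x \<partial>M\<bar> = \<bar>\<integral>x. k x + k (reflection u x) \<partial>M\<bar>"
    using int int_R integral_R by (simp add: k_def)
  also have "\<dots> \<le> (\<integral>x. 2 * (L * \<bar>w \<bullet> u\<bar> * (x \<bullet> u)\<^sup>2) \<partial>M)"
    using int int_R sq pointwise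
    by (intro integral_abs_bound_integral) (auto simp: k_def)
  finally show ?thesis by (simp add: k_def)
qed

lemma measure_uniform_Icc_greaterThan:
  fixes l u t :: real
  assumes "l < u"
  shows "measure (uniform_measure lborel {l..u}) {t<..} = (u - min u (max l t)) / (u - l)"
proof -
  consider "t < l" | "l \<le> t" "t \<le> u" | "u < t" by linarith
  then have "measure lborel ({l..u} \<inter> {t<..}) = u - min u (max l t)"
  proof cases
    case 1
    then have "{l..u} \<inter> {t<..} = {l..u}" by auto
    with 1 assms show ?thesis by simp
  next
    case 2
    then have "{l..u} \<inter> {t<..} = {t<..u}" by auto
    with 2 show ?thesis by simp
  next
    case 3
    then have "{l..u} \<inter> {t<..} = {}" by auto
    with 3 show ?thesis by simp
  qed
  with assms show ?thesis by (simp add: emeasure_lborel_Icc_eq)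
qed

lemma lipschitz_uniform_Icc_tail:
  fixes l u :: real
  assumes "l < u"
  shows "(1 / (u - l))-lipschitz_on UNIV (\<lambda>t. measure (uniform_measure lborel {l..u}) {t<..})"
proof (rule lipschitz_onI)
  fix s t :: real
  have "\<bar>min u (max l t) - min u (max l s)\<bar> \<le> \<bar>s - t\<bar>" by linarith
  with assms show "dist (measure (uniform_measure lborel {l..u}) {s<..})
      (measure (uniform_measure lborel {l..u}) {t<..}) \<le> 1 / (u - l) * dist s t"
    unfolding measure_uniform_Icc_greaterThan[OF assms] dist_real_def
    by (simp add: diff_divide_distrib[symmetric] divide_right_mono)
qed (use assms in simp)

lemma gaussian_density_eq_prod:
  fixes f :: "'a::euclidean_space \<Rightarrow> real"
  shows "(2 * pi) powr (- real DIM('a) / 2) * exp (- (norm (\<Sum>b\<in>Basis. f b *\<^sub>R b))\<^sup>2 / 2)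
       = (\<Prod>b\<in>Basis. std_normal_density (f b))"
proof -
  have "(norm (\<Sum>b\<in>Basis. f b *\<^sub>R b))\<^sup>2 = (\<Sum>b\<in>Basis. (f b)\<^sup>2)"
    unfolding power2_norm_eq_inner
    by (subst euclidean_inner) (simp add: power2_eq_square)
  moreover have "(2 * pi) powr (- real DIM('a) / 2) = (1 / sqrt (2 * pi)) ^ DIM('a)"
    by (simp add: powr_half_sqrt[symmetric] powr_minus_divide powr_power power_one_over)
  moreover have "(\<Prod>b\<in>Basis. exp (- (f b)\<^sup>2 / 2)) = exp (- (\<Sum>b\<in>Basis. (f b)\<^sup>2) / 2)"
    by (simp add: exp_sum[symmetric] sum_negf sum_divide_distrib)
  ultimately show ?thesis
    unfolding std_normal_density_def prod.distrib prod_constant by simp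
qed

lemma std_gaussian_eq_distr_PiM:
  "(std_gaussian :: (real ^ 'p) measure)
     = distr (PiM Basis (\<lambda>_. std_normal_distribution)) borel (\<lambda>f. \<Sum>b\<in>Basis. f b *\<^sub>R b)"
proof -
  let ?P = "PiM (Basis :: (real ^ 'p) set) (\<lambda>_. lborel)"
  let ?\<phi> = "\<lambda>f. \<Sum>b\<in>(Basis :: (real ^ 'p) set). f b *\<^sub>R b"
  let ?g = "\<lambda>x::real ^ 'p. ennreal ((2 * pi) powr (- real CARD('p) / 2) * exp (- (norm x)\<^sup>2 / 2))"
  have "std_gaussian = density (distr ?P borel ?\<phi>) ?g"
    unfolding std_gaussian_def by (simp only: lborel_eq[symmetric])
  also have "\<dots> = distr (density ?P (\<lambda>f. ?g (?\<phi> f))) borel ?\<phi>"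
    by (rule density_distr) measurable
  also have "density ?P (\<lambda>f. ?g (?\<phi> f))
      = density ?P (\<lambda>f. \<Prod>b\<in>Basis. ennreal (std_normal_density (f b)))"
    using gaussian_density_eq_prod[where 'a="real ^ 'p"]
    by (intro density_cong) (auto simp: prod_ennreal)
  also have "\<dots> = PiM Basis (\<lambda>_. std_normal_distribution)"
    by (intro density_PiM_prod lborel.sigma_finite_measure_axioms
              prob_space_imp_sigma_finite prob_space_normal_density) auto
  finally show ?thesis .
qed

lemma prob_space_std_gaussian: "prob_space std_gaussian"
  unfolding std_gaussian_eq_distr_PiM
  by (intro prob_space.prob_space_distr prob_space_PiM prob_space_normal_density) auto

lemma sets_std_gaussian[measurable_cong]: "sets std_gaussian = sets borel"
  by (simp add: std_gaussian_def)

lemma distr_std_gaussian_inner_Basis: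
  assumes b: "b \<in> Basis"
  shows "distr std_gaussian borel (\<lambda>x. x \<bullet> b) = std_normal_distribution"
proof -
  let ?Z = "PiM (Basis :: (real ^ 'p) set) (\<lambda>_. std_normal_distribution)"
  have "distr std_gaussian borel (\<lambda>x. x \<bullet> b) = distr ?Z borel (\<lambda>f. (\<Sum>c\<in>Basis. f c *\<^sub>R c) \<bullet> b)"
    unfolding std_gaussian_eq_distr_PiM by (subst distr_distr) (auto simp: comp_def)
  also have "\<dots> = distr ?Z std_normal_distribution (\<lambda>f. f b)"
    using b by (intro distr_cong) simp_all
  also have "\<dots> = std_normal_distribution"
    using b by (intro distr_PiM_component prob_space_normal_density) auto
  finally show ?thesis .
qed

lemma integrable_std_gaussian_inner_Basis_power:
  "b \<in> Basis \<Longrightarrow> integrable std_gaussian (\<lambda>x. (x \<bullet> b) ^ k)"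
  using integrable_std_normal_distribution_moment[of k]
  by (subst (asm) distr_std_gaussian_inner_Basis[symmetric]) (simp_all add: integrable_distr_eq)

lemma integral_std_gaussian_inner_Basis_sq:
  "b \<in> Basis \<Longrightarrow> (\<integral>x. (x \<bullet> b)\<^sup>2 \<partial>std_gaussian) = 1"
  using std_normal_distribution_even_moments(1)[of 1]
  by (subst (asm) distr_std_gaussian_inner_Basis[symmetric]) (simp_all add: integral_distr)

lemma integrable_std_gaussian_norm: "integrable std_gaussian norm"
proof (rule Bochner_Integration.integrable_bound)
  show "integrable std_gaussian (\<lambda>x. \<Sum>b\<in>Basis. \<bar>x \<bullet> b\<bar>)"
    using integrable_std_gaussian_inner_Basis_power[of _ 1]
    by (intro Bochner_Integration.integrable_sum integrable_abs) simp
  show "AE x in std_gaussian. norm (norm x) \<le> norm (\<Sum>b\<in>Basis. \<bar>x \<bullet> b\<bar>)"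
    using norm_le_l1 by (intro AE_I2) (simp add: sum_nonneg)
qed measurable

lemma distr_std_gaussian_reflection:
  fixes u :: "real ^ 'p"
  assumes u: "u \<in> Basis"
  shows "distr std_gaussian borel (reflection u) = std_gaussian"
proof -
  let ?g = "\<lambda>x::real ^ 'p. ennreal ((2 * pi) powr (- real CARD('p) / 2) * exp (- (norm x)\<^sup>2 / 2))"
  have "std_gaussian = density (distr lborel borel (reflection u)) ?g"
    unfolding std_gaussian_def distr_lborel_reflection[OF u] ..
  also have "\<dots> = distr (density lborel (\<lambda>x. ?g (reflection u x))) borel (reflection u)"
    by (rule density_distr) measurable
  also have "density lborel (\<lambda>x. ?g (reflection u x)) = std_gaussian"
    using u by (simp add: std_gaussian_def norm_reflection)
  finally show ?thesis ..
qed

lemma norm_integral_std_gaussian_lipschitz: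
  fixes w :: "real ^ 'p" and F :: "real \<Rightarrow> real"
  assumes F: "L-lipschitz_on UNIV F" and F_bounded: "\<And>t. \<bar>F t\<bar> \<le> C"
  shows "norm (\<integral>x. F (x \<bullet> w) *\<^sub>R x \<partial>std_gaussian) \<le> L * norm w"
proof -
  have [measurable]: "F \<in> borel_measurable borel"
    using F by (intro borel_measurable_continuous_onI lipschitz_on_continuous_on)
  have int: "integrable std_gaussian (\<lambda>x. F (x \<bullet> w) *\<^sub>R x)"
  proof (rule Bochner_Integration.integrable_bound)
    show "integrable std_gaussian (\<lambda>x. C * norm x)"
      by (simp add: integrable_std_gaussian_norm)
    show "AE x in std_gaussian. norm (F (x \<bullet> w) *\<^sub>R x) \<le> norm (C * norm x)"
      using F_bounded by (intro AE_I2) (simp add: abs_mult mult_right_mono order.trans[OF _ abs_ge_self])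
  qed measurable
  have "\<bar>(\<integral>x. F (x \<bullet> w) *\<^sub>R x \<partial>std_gaussian) \<bullet> b\<bar> \<le> \<bar>(L *\<^sub>R w) \<bullet> b\<bar>"
    if b: "b \<in> Basis" for b
  proof -
    have "(\<integral>x. F (x \<bullet> w) *\<^sub>R x \<partial>std_gaussian) \<bullet> b = (\<integral>x. F (x \<bullet> w) * (x \<bullet> b) \<partial>std_gaussian)"
      using int by (simp flip: integral_inner_left)
    also have "\<bar>\<dots>\<bar> \<le> L * \<bar>w \<bullet> b\<bar> * (\<integral>x. (x \<bullet> b)\<^sup>2 \<partial>std_gaussian)"
      using b F integrable_inner_left[OF int, of b] integrable_std_gaussian_inner_Basis_power[of b 2]
      by (intro abs_integral_lipschitz_mult_inner_le) (simp_all add: sets_std_gaussian distr_std_gaussian_reflection)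
    finally show ?thesis
      using b lipschitz_on_nonneg[OF F] by (simp add: integral_std_gaussian_inner_Basis_sq abs_mult)
  qed
  then have "norm (\<integral>x. F (x \<bullet> w) *\<^sub>R x \<partial>std_gaussian) \<le> norm (L *\<^sub>R w)"
    by (rule norm_le_componentwise)
  then show ?thesis
    using lipschitz_on_nonneg[OF F] by simp
qed

lemma sets_unif_eta[measurable_cong]: "sets unif_eta = sets borel"
  by (simp add: unif_eta_def)

lemma prob_space_unif_eta: "prob_space unif_eta"
  unfolding unif_eta_def by (rule prob_space_uniform_measure) (simp_all add: emeasure_lborel_Icc_eq)

lemma integrable_std_gaussian_uniform_cutoff:
  fixes c :: real
  assumes [measurable]: "Measurable.pred (std_gaussian \<Otimes>\<^sub>M unif_eta) P"
  shows "integrable (std_gaussian \<Otimes>\<^sub>M unif_eta)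
           (\<lambda>z::(real ^ 'p) \<times> real. if P z then c *\<^sub>R fst z else 0)"
proof -
  interpret U: prob_space unif_eta by (rule prob_space_unif_eta)
  have "integrable (distr (std_gaussian \<Otimes>\<^sub>M unif_eta) std_gaussian fst) (\<lambda>x::real ^ 'p. \<bar>c\<bar> * norm x)"
    by (simp add: U.distr_pair_fst integrable_std_gaussian_norm)
  then have "integrable (std_gaussian \<Otimes>\<^sub>M unif_eta) (\<lambda>z. \<bar>c\<bar> * norm (fst z :: real ^ 'p))"
    by (subst (asm) integrable_distr_eq) auto
  then show ?thesis
    by (rule Bochner_Integration.integrable_bound) auto
qed

lemma lipschitz_unif_eta_tail_window:
  fixes c a I :: real
  assumes I: "I > 0"
  shows "(9 * \<bar>c\<bar> / I)-lipschitz_on UNIV (\<lambda>s. c * measure unif_eta {\<bar>c + s\<bar> / I - a<..})"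
proof -
  define tail where "tail t = measure unif_eta {t<..}" for t
  have tail_lipschitz: "9-lipschitz_on UNIV tail"
    using lipschitz_uniform_Icc_tail[of "-1/18" "1/18"] by (simp add: tail_def unif_eta_def)
  have "(9 * \<bar>c\<bar> / I)-lipschitz_on UNIV (\<lambda>s. c * tail (\<bar>c + s\<bar> / I - a))"
  proof (rule lipschitz_onI)
    fix s t
    have "\<bar>tail (\<bar>c + s\<bar> / I - a) - tail (\<bar>c + t\<bar> / I - a)\<bar> \<le> 9 * \<bar>\<bar>c + s\<bar> / I - \<bar>c + t\<bar> / I\<bar>"
      using lipschitz_onD[OF tail_lipschitz, of "\<bar>c + s\<bar> / I - a" "\<bar>c + t\<bar> / I - a"]
      by (simp add: dist_real_def)
    also have "\<dots> \<le> 9 * (\<bar>s - t\<bar> / I)"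
      using I by (simp add: diff_divide_distrib[symmetric] divide_right_mono)
    finally have "\<bar>c\<bar> * \<bar>tail (\<bar>c + s\<bar> / I - a) - tail (\<bar>c + t\<bar> / I - a)\<bar> \<le> \<bar>c\<bar> * (9 * (\<bar>s - t\<bar> / I))"
      by (rule mult_left_mono) simp
    then show "dist (c * tail (\<bar>c + s\<bar> / I - a)) (c * tail (\<bar>c + t\<bar> / I - a))
        \<le> 9 * \<bar>c\<bar> / I * dist s t"
      by (simp add: dist_real_def abs_mult mult_ac flip: right_diff_distrib)
  qed (use I in simp)
  then show ?thesis by (simp add: tail_def)
qed

lemma norm_integral_std_gaussian_uniform_window:
  fixes w :: "real ^ 'p" and c a I :: real
  assumes I: "I > 0"
  shows "norm (\<integral>z. (if \<bar>c + fst z \<bullet> w\<bar> < (a + snd z) * I then c *\<^sub>R fst z else 0)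
                 \<partial>(std_gaussian \<Otimes>\<^sub>M unif_eta)) \<le> 9 * \<bar>c\<bar> / I * norm w"
proof -
  interpret G: prob_space "std_gaussian :: (real ^ 'p) measure" by (rule prob_space_std_gaussian)
  interpret U: prob_space unif_eta by (rule prob_space_unif_eta)
  interpret pair_prob_space "std_gaussian :: (real ^ 'p) measure" unif_eta ..
  define h where "h z = (if \<bar>c + fst z \<bullet> w\<bar> < (a + snd z) * I then c *\<^sub>R fst z else 0)"
    for z :: "(real ^ 'p) \<times> real"
  define F where "F s = c * measure unif_eta {\<bar>c + s\<bar> / I - a<..}" for s
  have [measurable]: "h \<in> borel_measurable (std_gaussian \<Otimes>\<^sub>M unif_eta)"
    unfolding h_def by measurable
  have int: "integrable (std_gaussian \<Otimes>\<^sub>M unif_eta) h"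
    unfolding h_def by (rule integrable_std_gaussian_uniform_cutoff) measurable
  have inner: "(\<integral>\<eta>. h (x, \<eta>) \<partial>unif_eta) = F (x \<bullet> w) *\<^sub>R x" for x
  proof -
    let ?S = "{\<bar>c + x \<bullet> w\<bar> / I - a<..}"
    have h_eq: "h (x, \<eta>) = indicator ?S \<eta> *\<^sub>R (c *\<^sub>R x)" for \<eta>
      using I by (simp add: h_def indicator_def field_simps)
    have "(\<integral>\<eta>. h (x, \<eta>) \<partial>unif_eta) = (\<integral>\<eta>. indicator ?S \<eta> \<partial>unif_eta) *\<^sub>R (c *\<^sub>R x)"
      unfolding h_eq
      by (rule integral_scaleR_left) (auto simp: less_top[symmetric])
    then show ?thesis by (simp add: F_def)
  qed
  have "(9 * \<bar>c\<bar> / I)-lipschitz_on UNIV F"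
    unfolding F_def[abs_def] using I by (rule lipschitz_unif_eta_tail_window)
  moreover have "\<bar>F s\<bar> \<le> \<bar>c\<bar>" for s
    by (simp add: F_def abs_mult mult_left_le)
  ultimately have "norm (\<integral>x. F (x \<bullet> w) *\<^sub>R x \<partial>std_gaussian) \<le> 9 * \<bar>c\<bar> / I * norm w"
    by (rule norm_integral_std_gaussian_lipschitz)
  moreover have "(\<integral>z. h z \<partial>(std_gaussian \<Otimes>\<^sub>M unif_eta)) = (\<integral>x. F (x \<bullet> w) *\<^sub>R x \<partial>std_gaussian)"
    using integral_fst'[OF int] by (simp add: inner)
  ultimately show ?thesis by (simp add: h_def)
qed

lemma abs_add_le_of_mem_Qset:
  assumes "i \<in> Qset n b I j" and "\<bar>\<epsilon> i\<bar> \<le> 2/9 * I" and "I > 0" and "j \<ge> 1"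
  shows "\<bar>b i + \<epsilon> i\<bar> \<le> real j * I"
proof -
  have "\<bar>b i - (real j - 1/2) * I\<bar> \<le> 5/18 * I" using assms(1) by (simp add: Qset_def)
  moreover have "I \<le> real j * I" using assms(3,4) by simp
  ultimately show ?thesis
    using assms(2) unfolding abs_le_iff left_diff_distrib by linarith
qed

lemma integral_T3_eq_sum:
  fixes dw :: "real ^ 'p"
  shows "integral\<^sup>L (sample_space n) (T3 n b \<epsilon> dw I j)
     = (\<Sum>i\<in>Qset n b I j. \<integral>z. (if \<bar>b i + \<epsilon> i + fst z \<bullet> dw\<bar> < (real j - 1/2 + snd z) * I
                                  then (b i + \<epsilon> i) *\<^sub>R fst z else 0) \<partial>(std_gaussian \<Otimes>\<^sub>M unif_eta))"
proof -
  define M where "M = (std_gaussian :: (real ^ 'p) measure) \<Otimes>\<^sub>M unif_eta"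
  define h where "h i z = (if \<bar>b i + \<epsilon> i + fst z \<bullet> dw\<bar> < (real j - 1/2 + snd z) * I
                            then (b i + \<epsilon> i) *\<^sub>R fst z else 0)"
    for i and z :: "(real ^ 'p) \<times> real"
  have Q: "finite (Qset n b I j)" "Qset n b I j \<subseteq> {..<n}" by (auto simp: Qset_def)
  have M: "prob_space M"
    unfolding M_def by (intro prob_space_pair prob_space_std_gaussian prob_space_unif_eta)
  have [measurable]: "h i \<in> borel_measurable M" for i
    unfolding h_def M_def by measurable
  have "integral\<^sup>L (sample_space n) (T3 n b \<epsilon> dw I j)
      = (\<integral>\<omega>. (\<Sum>i\<in>Qset n b I j. h i (\<omega> i)) \<partial>PiM {..<n} (\<lambda>_. M))"
    by (simp add: sample_space_def T3_def[abs_def] h_def M_def)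
  also have "\<dots> = (\<Sum>i\<in>Qset n b I j. \<integral>\<omega>. h i (\<omega> i) \<partial>PiM {..<n} (\<lambda>_. M))"
    using Q M unfolding M_def h_def
    by (intro Bochner_Integration.integral_sum integrable_PiM_component
              integrable_std_gaussian_uniform_cutoff) auto
  also have "\<dots> = (\<Sum>i\<in>Qset n b I j. \<integral>z. h i z \<partial>M)"
    using Q M by (intro sum.cong refl integral_PiM_component) auto
  finally show ?thesis by (simp add: h_def M_def)
qed

lemma norm_integral_T3_le:
  fixes dw :: "real ^ 'p"
  assumes I: "I > 0" and C: "\<And>i. i \<in> Qset n b I j \<Longrightarrow> \<bar>b i + \<epsilon> i\<bar> \<le> C"
  shows "norm (integral\<^sup>L (sample_space n) (T3 n b \<epsilon> dw I j))
           \<le> real (card (Qset n b I j)) * (9 * C / I * norm dw)"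
proof -
  have summand_bound: "norm (\<integral>z. (if \<bar>b i + \<epsilon> i + fst z \<bullet> dw\<bar> < (real j - 1/2 + snd z) * I
                       then (b i + \<epsilon> i) *\<^sub>R fst z else 0) \<partial>(std_gaussian \<Otimes>\<^sub>M unif_eta))
        \<le> 9 * C / I * norm dw" if "i \<in> Qset n b I j" for i
  proof -
    have "9 * \<bar>b i + \<epsilon> i\<bar> / I * norm dw \<le> 9 * C / I * norm dw"
      using C[OF that] I by (intro mult_right_mono divide_right_mono) auto
    with norm_integral_std_gaussian_uniform_window[OF I, of "b i + \<epsilon> i" dw "real j - 1/2"]
    show ?thesis by (rule order.trans)
  qed
  have "norm (integral\<^sup>L (sample_space n) (T3 n b \<epsilon> dw I j))
      \<le> (\<Sum>i\<in>Qset n b I j. 9 * C / I * norm dw)"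
    unfolding integral_T3_eq_sum by (rule sum_norm_le) (rule summand_bound)
  then show ?thesis by simp
qed

theorem mainTheorem10:
  fixes n :: nat and \<gamma> I :: real and j :: nat
    and b \<epsilon> :: "nat \<Rightarrow> real" and dw :: "real ^ 'p"
  assumes "n \<ge> 2" and "\<gamma> > 0" and "I > 0" and "j \<ge> 1"
    and "\<forall>i<n. \<bar>\<epsilon> i\<bar> \<le> 2/9 * I"
    and "real (card (Qset n b I j)) \<le> \<gamma> * real n / (real j * ln (real n))"
  shows "norm (integral\<^sup>L (sample_space n) (T3 n b \<epsilon> dw I j))
           \<le> 11 * \<gamma> * real n / ln (real n) * norm dw"
proof -
  have "real (card (Qset n b I j)) * real j \<le> \<gamma> * real n / (real j * ln (real n)) * real j"
    using assms(6) by (rule mult_right_mono) simp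
  with assms(4) have card_bound: "real (card (Qset n b I j)) * real j \<le> \<gamma> * real n / ln (real n)"
    by simp
  have summand_bound: "\<bar>b i + \<epsilon> i\<bar> \<le> real j * I" if "i \<in> Qset n b I j" for i
    using that assms(3-5) by (intro abs_add_le_of_mem_Qset) (auto simp: Qset_def)
  have "norm (integral\<^sup>L (sample_space n) (T3 n b \<epsilon> dw I j))
      \<le> real (card (Qset n b I j)) * (9 * (real j * I) / I * norm dw)"
    by (rule norm_integral_T3_le[OF assms(3) summand_bound])
  also have "\<dots> = 9 * (real (card (Qset n b I j)) * real j) * norm dw"
    using assms(3) by simp
  also have "\<dots> \<le> 9 * (\<gamma> * real n / ln (real n)) * norm dw"
    using card_bound by (intro mult_right_mono mult_left_mono) simp_all
  also have "\<dots> \<le> 11 * (\<gamma> * real n / ln (real n)) * norm dw"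
    using assms(1,2) by (intro mult_right_mono) auto
  finally show ?thesis by simp
qed

end
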